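(* Let $D$ be a finite directed graph that is essentially a tree. Then $\Delta(D)$ is vertex decomposable, and hence shellable (in the nonpure sense).
   Context: For a finite directed graph $D$ (no loops, no multiple edges), the complex of directed trees $\Delta(D)$ has the directed edges of $D$ as vertices, and its faces are the edge sets of directed forests in $D$ (vertex-disjoint unions of rooted directed trees; equivalently, edge sets in which every vertex has in-degree at most $1$ and there is no directed cycle). $D$ is essentially a tree if the undirected graph obtained by replacing every directed edge, or pair of oppositely directed edges between the same two vertices, by a single undirected edge is a tree. A simplicial complex $\Delta$ is vertex decomposable if it is a simplex, or there is a vertex $v$ (a shedding vertex) such that $\Delta\setminus v$ (faces not containing $v$) and $\mathrm{link}_\Delta v$ are vertex decomposable and no facet of $\mathrm{link}_\Delta v$ is a facet of $\Delta\setminus v$. A (possibly nonpure) complex is shellable if its facets admit a linear order $F_1,\ldots,F_k$ such that for all $i<j$ there exist $l<j$ and a vertex $v\in F_j$ with $F_i\cap F_j\subseteq F_l\cap F_j=F_j\setminus\{v\}$. *)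

theory Defs
  imports Main
begin

text \<open>A finite directed graph: finite vertex set V, edge set E of ordered pairs
  inside V, no loops (multiple edges are excluded automatically by using a set).\<close>
definition digraph :: "'v set \<Rightarrow> ('v \<times> 'v) set \<Rightarrow> bool" where
  "digraph V E \<longleftrightarrow> finite V \<and> E \<subseteq> V \<times> V \<and> (\<forall>(u, w) \<in> E. u \<noteq> w)"

definition directed_forest :: "('v \<times> 'v) set \<Rightarrow> bool" where
  "directed_forest S \<longleftrightarrow>
     (\<forall>(a, b) \<in> S. \<forall>(c, d) \<in> S. b = d \<longrightarrow> a = c) \<and> acyclic S"

definition tree_complex :: "('v \<times> 'v) set \<Rightarrow> ('v \<times> 'v) set set" where
  "tree_complex E = {S. S \<subseteq> E \<and> directed_forest S}"

text \<open>Underlying undirected edges: each directed edge (or antiparallel pair) becomes one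
  undirected edge.\<close>
definition underlying_edges :: "('v \<times> 'v) set \<Rightarrow> 'v set set" where
  "underlying_edges E = {{u, w} | u w. (u, w) \<in> E}"

definition ug_connected :: "'v set \<Rightarrow> ('v \<times> 'v) set \<Rightarrow> bool" where
  "ug_connected V E \<longleftrightarrow> (\<forall>u \<in> V. \<forall>w \<in> V. (u, w) \<in> (E \<union> E\<inverse>)\<^sup>*)"

definition ug_has_cycle :: "'v set \<Rightarrow> ('v \<times> 'v) set \<Rightarrow> bool" where
  "ug_has_cycle V E \<longleftrightarrow> (\<exists>cs. length cs \<ge> 3 \<and> distinct cs \<and> set cs \<subseteq> V \<and>
      (\<forall>i < length cs. {cs ! i, cs ! ((i + 1) mod length cs)} \<in> underlying_edges E))"

definition essentially_tree :: "'v set \<Rightarrow> ('v \<times> 'v) set \<Rightarrow> bool" where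
  "essentially_tree V E \<longleftrightarrow> V \<noteq> {} \<and> ug_connected V E \<and> \<not> ug_has_cycle V E"

definition deletion :: "'a set set \<Rightarrow> 'a \<Rightarrow> 'a set set" where
  "deletion K v = {F \<in> K. v \<notin> F}"

definition link :: "'a set set \<Rightarrow> 'a \<Rightarrow> 'a set set" where
  "link K v = {F \<in> K. v \<notin> F \<and> insert v F \<in> K}"

definition facets :: "'a set set \<Rightarrow> 'a set set" where
  "facets K = {F \<in> K. \<forall>G \<in> K. F \<subseteq> G \<longrightarrow> G = F}"

definition is_simplex :: "'a set set \<Rightarrow> bool" where
  "is_simplex K \<longleftrightarrow> (\<exists>F. finite F \<and> K = Pow F)"

inductive vertex_decomposable :: "'a set set \<Rightarrow> bool" where
  simplex: "is_simplex K \<Longrightarrow> vertex_decomposable K"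
| shed: "v \<in> \<Union>K \<Longrightarrow> vertex_decomposable (deletion K v) \<Longrightarrow>
         vertex_decomposable (link K v) \<Longrightarrow>
         facets (link K v) \<inter> facets (deletion K v) = {} \<Longrightarrow> vertex_decomposable K"

definition shellable :: "'a set set \<Rightarrow> bool" where
  "shellable K \<longleftrightarrow> (\<exists>fs. distinct fs \<and> set fs = facets K \<and>
     (\<forall>j < length fs. \<forall>i < j. \<exists>l < j. \<exists>v \<in> fs ! j.
        fs ! i \<inter> fs ! j \<subseteq> fs ! l \<inter> fs ! j \<and> fs ! l \<inter> fs ! j = fs ! j - {v}))"

end

theory Submission
  imports Defs
begin

text \<open>Call two distinct edges conflicting if they have the same head or are antiparallel.
  When the underlying graph of \<open>D\<close> has no cycles, a directed cycle can only be a pair of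
  antiparallel edges, so the directed forests are exactly the independent sets of the conflict
  graph, and \<open>\<Delta>(D)\<close> is its independence complex. In every induced subgraph of the conflict graph
  that has an edge, some vertex \<open>x\<close> dominates a neighbour \<open>w\<close>, i.e. \<open>N[w] \<subseteq> N[x]\<close>: otherwise one
  could walk forever along antiparallel pairs of edges without backtracking and would close an
  undirected cycle. Such an \<open>x\<close> is a shedding vertex (Woodroofe), and its deletion and link are
  independence complexes of smaller edge sets, so induction gives vertex decomposability.
  Shellability follows as in Bjoerner and Wachs: shell the deletion, then the cone over a
  shelling of the link.\<close>

section \<open>Shellability of vertex decomposable complexes\<close>

definition downward_closed :: "'a set set \<Rightarrow> bool" where
  "downward_closed K \<longleftrightarrow> (\<forall>F\<in>K. \<forall>G. G \<subseteq> F \<longrightarrow> G \<in> K)"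

lemma downward_closed_deletion: "downward_closed K \<Longrightarrow> downward_closed (deletion K v)"
  by (auto simp: downward_closed_def deletion_def)

lemma downward_closed_link: "downward_closed K \<Longrightarrow> downward_closed (link K v)"
  unfolding downward_closed_def link_def by (auto dest: insert_mono)

lemma exists_facet_superset:
  assumes "finite K" and "F \<in> K"
  obtains G where "G \<in> facets K" and "F \<subseteq> G"
  using finite_has_maximal2[OF assms] that by (auto simp: facets_def)

lemma facets_subset_deletion_link:
  assumes "downward_closed K"
  shows "facets K \<subseteq> facets (deletion K v) \<union> insert v ` facets (link K v)"
proof
  fix H assume H: "H \<in> facets K"
  show "H \<in> facets (deletion K v) \<union> insert v ` facets (link K v)"
  proof (cases "v \<in> H")
    case False
    then show ?thesis using H by (auto simp: facets_def deletion_def)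
  next
    case True
    have "H - {v} \<in> facets (link K v)"
      unfolding facets_def
    proof (intro CollectI conjI ballI impI)
      show "H - {v} \<in> link K v"
        using H True assms by (auto simp: facets_def link_def downward_closed_def insert_absorb)
      fix G assume "G \<in> link K v" "H - {v} \<subseteq> G"
      then have "insert v G = H"
        using H by (auto simp: facets_def link_def)
      then show "G = H - {v}" using \<open>G \<in> link K v\<close> by (auto simp: link_def)
    qed
    moreover have "H = insert v (H - {v})" using True by auto
    ultimately show ?thesis by blast
  qed
qed

lemma deletion_link_subset_facets:
  assumes "downward_closed K"
    and disjoint: "facets (link K v) \<inter> facets (deletion K v) = {}"
  shows "facets (deletion K v) \<union> insert v ` facets (link K v) \<subseteq> facets K"
proof (intro Un_least subsetI)
  fix H assume H: "H \<in> facets (deletion K v)"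
  then have "H \<in> K" and "v \<notin> H" by (auto simp: facets_def deletion_def)
  have "G = H" if "G \<in> K" "H \<subseteq> G" for G
  proof (cases "v \<in> G")
    case False
    then show ?thesis using H that by (auto simp: facets_def deletion_def)
  next
    case True
    text \<open>Then \<open>H\<close> would be a facet of the link as well.\<close>
    have "G - {v} \<in> deletion K v"
      using that assms(1) by (auto simp: deletion_def downward_closed_def)
    then have "G - {v} = H"
      using H that \<open>v \<notin> H\<close> by (auto simp: facets_def)
    then have "H \<in> link K v"
      using that True \<open>H \<in> K\<close> \<open>v \<notin> H\<close> by (auto simp: link_def insert_absorb)
    then have "H \<in> facets (link K v)"
      using H by (auto simp: facets_def deletion_def link_def)
    then show ?thesis using H disjoint by blast
  qed
  then show "H \<in> facets K" using \<open>H \<in> K\<close> by (auto simp: facets_def)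
next
  fix H assume "H \<in> insert v ` facets (link K v)"
  then obtain G where G: "G \<in> facets (link K v)" and "H = insert v G" by blast
  then have "H \<in> K" and "v \<notin> G" by (auto simp: facets_def link_def)
  have "H' = H" if "H' \<in> K" "H \<subseteq> H'" for H'
  proof -
    have "v \<in> H'" using that \<open>H = insert v G\<close> by auto
    then have "H' - {v} \<in> link K v"
      using that assms(1) by (auto simp: link_def downward_closed_def insert_absorb)
    then have "H' - {v} = G"
      using G that \<open>H = insert v G\<close> \<open>v \<notin> G\<close> by (auto simp: facets_def)
    then show ?thesis using \<open>v \<in> H'\<close> \<open>H = insert v G\<close> by auto
  qed
  then show "H \<in> facets K" using \<open>H \<in> K\<close> by (auto simp: facets_def)
qed

lemma facets_eq_deletion_link:
  assumes "downward_closed K" and "facets (link K v) \<inter> facets (deletion K v) = {}"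
  shows "facets K = facets (deletion K v) \<union> insert v ` facets (link K v)"
  using facets_subset_deletion_link[OF assms(1)] deletion_link_subset_facets[OF assms] by blast

definition shelling_step :: "'a set list \<Rightarrow> 'a set \<Rightarrow> bool" where
  "shelling_step P F \<longleftrightarrow>
     (\<forall>A\<in>set P. \<exists>B\<in>set P. \<exists>u\<in>F. A \<inter> F \<subseteq> B \<inter> F \<and> B \<inter> F = F - {u})"

lemma shellable_iff_shelling_steps:
  "shellable K \<longleftrightarrow>
     (\<exists>fs. distinct fs \<and> set fs = facets K \<and> (\<forall>j < length fs. shelling_step (take j fs) (fs ! j)))"
proof -
  have "shelling_step (take j fs) (fs ! j) \<longleftrightarrow>
      (\<forall>i < j. \<exists>l < j. \<exists>v \<in> fs ! j.
        fs ! i \<inter> fs ! j \<subseteq> fs ! l \<inter> fs ! j \<and> fs ! l \<inter> fs ! j = fs ! j - {v})"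
    if "j < length fs" for fs :: "'a set list" and j
    using that by (simp add: shelling_step_def nth_image[symmetric] atLeast0LessThan)
      (simp add: Ball_def Bex_def)
  then show ?thesis by (simp add: shellable_def)
qed

lemma shelling_step_cone:
  assumes "shelling_step P G" and "v \<notin> G"
    and "B \<in> set Q" and "G \<subseteq> B" and avoid_v: "\<And>A. A \<in> set Q \<Longrightarrow> v \<notin> A"
  shows "shelling_step (Q @ map (insert v) P) (insert v G)"
  unfolding shelling_step_def
proof
  fix A assume A: "A \<in> set (Q @ map (insert v) P)"
  show "\<exists>B\<in>set (Q @ map (insert v) P). \<exists>u\<in>insert v G.
      A \<inter> insert v G \<subseteq> B \<inter> insert v G \<and> B \<inter> insert v G = insert v G - {u}"
  proof (cases "A \<in> set Q")
    case True
    text \<open>\<open>A\<close> and \<open>B\<close> avoid \<open>v\<close>, so both meet \<open>insert v G\<close> inside \<open>G \<subseteq> B\<close>.\<close>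
    have "A \<inter> insert v G \<subseteq> B \<inter> insert v G" "B \<inter> insert v G = insert v G - {v}"
      using avoid_v[OF True] avoid_v[OF assms(3)] assms(2,4) by auto
    then show ?thesis
      using assms(3) by (intro bexI[of _ B] bexI[of _ v] conjI) simp_all
  next
    case False
    then obtain A' where "A' \<in> set P" and "A = insert v A'" using A by auto
    then obtain B' u where "B' \<in> set P" "u \<in> G" "A' \<inter> G \<subseteq> B' \<inter> G" "B' \<inter> G = G - {u}"
      using assms(1) unfolding shelling_step_def by blast
    have "u \<noteq> v" using \<open>u \<in> G\<close> assms(2) by auto
    then have "A \<inter> insert v G \<subseteq> insert v B' \<inter> insert v G"
      and "insert v B' \<inter> insert v G = insert v G - {u}"
      using \<open>A = insert v A'\<close> \<open>A' \<inter> G \<subseteq> B' \<inter> G\<close> \<open>B' \<inter> G = G - {u}\<close> by auto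
    moreover have "insert v B' \<in> set (Q @ map (insert v) P)" using \<open>B' \<in> set P\<close> by simp
    ultimately show ?thesis using \<open>u \<in> G\<close> by blast
  qed
qed

lemma shellable_if_vertex_decomposable:
  assumes "vertex_decomposable K" and "finite K" and "downward_closed K"
  shows "shellable K"
  using assms
proof (induction rule: vertex_decomposable.induct)
  case (simplex K)
  then obtain F where "K = Pow F" by (auto simp: is_simplex_def)
  then have "facets K = {F}" by (auto simp: facets_def)
  then show ?case unfolding shellable_def by (intro exI[of _ "[F]"]) auto
next
  case (shed v K)
  let ?D = "deletion K v" and ?L = "link K v"
  have "finite ?D" "finite ?L" using shed.prems(1) by (auto simp: deletion_def link_def)
  obtain fs1 where fs1: "distinct fs1" "set fs1 = facets ?D"
    and steps1: "\<And>j. j < length fs1 \<Longrightarrow> shelling_step (take j fs1) (fs1 ! j)"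
    using shed.IH(1)[OF \<open>finite ?D\<close> downward_closed_deletion[OF shed.prems(2)]]
    unfolding shellable_iff_shelling_steps by blast
  obtain fs2 where fs2: "distinct fs2" "set fs2 = facets ?L"
    and steps2: "\<And>j. j < length fs2 \<Longrightarrow> shelling_step (take j fs2) (fs2 ! j)"
    using shed.IH(2)[OF \<open>finite ?L\<close> downward_closed_link[OF shed.prems(2)]]
    unfolding shellable_iff_shelling_steps by blast
  have v_fs1: "v \<notin> A" if "A \<in> set fs1" for A
    using that fs1(2) by (auto simp: facets_def deletion_def)
  have fs2_D: "G \<in> ?D" and v_fs2: "v \<notin> G" if "G \<in> set fs2" for G
    using that fs2(2) by (auto simp: facets_def deletion_def link_def)
  define fs where "fs = fs1 @ map (insert v) fs2"
  have "inj_on (insert v) (set fs2)"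
    using v_fs2 by (intro inj_onI) (metis insert_ident)
  then have "distinct fs"
    using fs1(1) fs2(1) v_fs1 by (auto simp: fs_def distinct_map)
  moreover have "set fs = facets K"
    using facets_eq_deletion_link[OF shed.prems(2) shed.hyps(4)] fs1(2) fs2(2)
    by (simp add: fs_def)
  moreover have "shelling_step (take j fs) (fs ! j)" if "j < length fs" for j
  proof (cases "j < length fs1")
    case True
    then show ?thesis using steps1 by (simp add: fs_def nth_append)
  next
    case False
    define k where "k = j - length fs1"
    have "k < length fs2" using that False by (simp add: fs_def k_def)
    then have "fs2 ! k \<in> set fs2" by simp
    then obtain B where "B \<in> set fs1" "fs2 ! k \<subseteq> B"
      using exists_facet_superset[OF \<open>finite ?D\<close> fs2_D] fs1(2) by blast
    have "take j fs = fs1 @ map (insert v) (take k fs2)" "fs ! j = insert v (fs2 ! k)"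
      using False \<open>k < length fs2\<close> by (simp_all add: fs_def k_def nth_append take_map)
    then show ?thesis
      using shelling_step_cone[OF steps2[OF \<open>k < length fs2\<close>] v_fs2[OF \<open>fs2 ! k \<in> set fs2\<close>]
          \<open>B \<in> set fs1\<close> \<open>fs2 ! k \<subseteq> B\<close> v_fs1]
      by simp
  qed
  ultimately show ?case
    unfolding shellable_iff_shelling_steps by blast
qed

section \<open>Independence complexes\<close>

definition independence_complex :: "('a \<Rightarrow> 'a \<Rightarrow> bool) \<Rightarrow> 'a set \<Rightarrow> 'a set set" where
  "independence_complex R X = {S. S \<subseteq> X \<and> (\<forall>e\<in>S. \<forall>f\<in>S. \<not> R e f)}"

definition dominates :: "('a \<Rightarrow> 'a \<Rightarrow> bool) \<Rightarrow> 'a set \<Rightarrow> 'a \<Rightarrow> 'a \<Rightarrow> bool" where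
  "dominates R X x w \<longleftrightarrow> R w x \<and> (\<forall>y\<in>X. R y w \<longrightarrow> y = x \<or> R y x)"

lemma deletion_independence_complex:
  "deletion (independence_complex R X) x = independence_complex R (X - {x})"
  by (auto simp: deletion_def independence_complex_def)

lemma link_independence_complex:
  assumes "symp R" and "\<not> R x x" and "x \<in> X"
  shows "link (independence_complex R X) x = independence_complex R (X - insert x {y. R x y})"
  unfolding link_def independence_complex_def
  using assms(2,3) sympD[OF assms(1)] by blast

lemma facets_link_deletion_disjoint_if_dominates:
  assumes "symp R" and "irreflp R" and "x \<in> X" and "w \<in> X" and "dominates R X x w"
  shows "facets (link (independence_complex R X) x)
    \<inter> facets (deletion (independence_complex R X) x) = {}"
proof (rule ccontr)
  let ?N = "insert x {y. R x y}"
  note sym = sympD[OF assms(1)] and irrefl = irreflpD[OF assms(2)]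
  assume "facets (link (independence_complex R X) x)
    \<inter> facets (deletion (independence_complex R X) x) \<noteq> {}"
  then obtain S where S_link: "S \<in> independence_complex R (X - ?N)"
    and S_facet: "S \<in> facets (independence_complex R (X - {x}))"
    by (auto simp: facets_def deletion_independence_complex
        link_independence_complex[OF assms(1) irrefl assms(3)])
  have "R w x" and w_dom: "\<And>y. y \<in> X \<Longrightarrow> R y w \<Longrightarrow> y = x \<or> R y x"
    using assms(5) by (auto simp: dominates_def)
  then have "w \<in> ?N" and "w \<noteq> x"
    using sym[of w x] irrefl[of x] by auto
  then have "w \<notin> S" using S_link by (auto simp: independence_complex_def)
  have "\<not> R s w" if "s \<in> S" for s
  proof
    assume "R s w"
    then have "s \<in> ?N" using w_dom[of s] S_link that sym[of s x]
      by (auto simp: independence_complex_def)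
    then show False using S_link that by (auto simp: independence_complex_def)
  qed
  then have "insert w S \<in> independence_complex R (X - {x})"
    using S_link assms(4) \<open>w \<noteq> x\<close> irrefl[of w] sym[of w]
    unfolding independence_complex_def by blast
  then show False
    using S_facet \<open>w \<notin> S\<close> by (auto simp: facets_def)
qed

lemma vertex_decomposable_independence_complex:
  assumes "finite X" and "symp R" and "irreflp R"
    and dominated: "\<And>Y. Y \<subseteq> X \<Longrightarrow> \<exists>e\<in>Y. \<exists>f\<in>Y. R e f \<Longrightarrow> \<exists>x\<in>Y. \<exists>w\<in>Y. dominates R Y x w"
  shows "vertex_decomposable (independence_complex R X)"
  using assms(1) dominated
proof (induction X rule: finite_psubset_induct)
  case (psubset X)
  show ?case
  proof (cases "\<exists>e\<in>X. \<exists>f\<in>X. R e f")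
    case False
    then have "independence_complex R X = Pow X" by (auto simp: independence_complex_def)
    moreover have "is_simplex (Pow X)"
      unfolding is_simplex_def using psubset.hyps by (intro exI[of _ X]) simp
    ultimately show ?thesis by (simp add: vertex_decomposable.simplex)
  next
    case True
    then obtain x w where "x \<in> X" "w \<in> X" and dom: "dominates R X x w"
      using psubset.prems[OF subset_refl True] by blast
    have "\<not> R x x" using assms(3) by (rule irreflpD)
    have smaller: "vertex_decomposable (independence_complex R Y)" if "Y \<subset> X" for Y
      using that by (intro psubset.IH[OF that] psubset.prems) auto
    have "x \<in> \<Union> (independence_complex R X)"
      using \<open>x \<in> X\<close> \<open>\<not> R x x\<close> by (auto simp: independence_complex_def)
    moreover have "vertex_decomposable (deletion (independence_complex R X) x)"
      unfolding deletion_independence_complex using \<open>x \<in> X\<close> by (intro smaller) auto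
    moreover have "vertex_decomposable (link (independence_complex R X) x)"
      unfolding link_independence_complex[OF assms(2) \<open>\<not> R x x\<close> \<open>x \<in> X\<close>]
      using \<open>x \<in> X\<close> by (intro smaller) auto
    ultimately show ?thesis
      using facets_link_deletion_disjoint_if_dominates[OF assms(2,3) \<open>x \<in> X\<close> \<open>w \<in> X\<close> dom]
      by (rule vertex_decomposable.shed)
  qed
qed

section \<open>Non-backtracking walks\<close>

lemma exists_first_repetition:
  assumes "finite V" and "\<And>n. a n \<in> V"
  obtains i m where "i < m" and "a i = a m" and "distinct (map a [0..<m])"
proof -
  have "\<not> inj_on a {..card V}"
  proof
    assume "inj_on a {..card V}"
    then have "card (a ` {..card V}) = Suc (card V)" by (simp add: card_image)
    moreover have "card (a ` {..card V}) \<le> card V"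
      using assms by (intro card_mono) auto
    ultimately show False by simp
  qed
  then have "\<exists>m. \<exists>i<m. a i = a m"
    unfolding inj_on_def by (metis linorder_neqE_nat)
  define m where "m = (LEAST m. \<exists>i<m. a i = a m)"
  have "\<exists>i<m. a i = a m"
    unfolding m_def by (rule LeastI_ex) fact
  moreover have "inj_on a {0..<m}"
  proof (rule inj_onI)
    have no_earlier_repeat: "a p \<noteq> a q" if "p < q" "q < m" for p q
      using that not_less_Least[of q "\<lambda>m. \<exists>i<m. a i = a m"] unfolding m_def by blast
    fix p q assume "p \<in> {0..<m}" "q \<in> {0..<m}" "a p = a q"
    then show "p = q"
      using no_earlier_repeat by (metis atLeastLessThan_iff linorder_neqE_nat)
  qed
  ultimately show thesis
    using that by (auto simp: distinct_map)
qed

lemma ug_has_cycle_if_closed_walk: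
  assumes "i + 3 \<le> m" and "a i = a m" and "distinct (map a [i..<m])"
    and "\<And>n. a n \<in> V" and "\<And>n. (a n, a (Suc n)) \<in> E \<or> (a (Suc n), a n) \<in> E"
  shows "ug_has_cycle V E"
  unfolding ug_has_cycle_def
proof (intro exI[of _ "map a [i..<m]"] conjI allI impI)
  let ?cs = "map a [i..<m]"
  fix k assume k: "k < length ?cs"
  have "?cs ! ((k + 1) mod length ?cs) = a (Suc (i + k))"
  proof (cases "k + 1 < length ?cs")
    case False
    then have "k + 1 = length ?cs" "Suc (i + k) = m" using k by simp_all
    then show ?thesis using assms(1,2) by simp
  qed simp
  moreover have "{a n, a (Suc n)} \<in> underlying_edges E" for n
    using assms(5)[of n] unfolding underlying_edges_def by (auto simp: insert_commute)
  ultimately show "{?cs ! k, ?cs ! ((k + 1) mod length ?cs)} \<in> underlying_edges E"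
    using k by simp
qed (use assms in auto)

lemma ug_has_cycle_if_non_backtracking_walk:
  assumes "finite V" and "\<And>n. a n \<in> V"
    and "\<And>n. (a n, a (Suc n)) \<in> E \<or> (a (Suc n), a n) \<in> E"
    and "\<And>n. a (Suc n) \<noteq> a n" and "\<And>n. a (Suc (Suc n)) \<noteq> a n"
  shows "ug_has_cycle V E"
proof -
  obtain i m where im: "i < m" "a i = a m" and dist: "distinct (map a [0..<m])"
    using exists_first_repetition[OF assms(1,2)] .
  have "[0..<m] = [0..<i] @ [i..<m]"
    using upt_add_eq_append[of 0 i "m - i"] im(1) by simp
  then have "distinct (map a [i..<m])" using dist by simp
  moreover have "i + 3 \<le> m"
  proof (rule ccontr)
    assume "\<not> i + 3 \<le> m"
    then have "m = Suc i \<or> m = Suc (Suc i)" using im(1) by linarith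
    then show False using assms(4,5)[of i] im(2) by auto
  qed
  ultimately show ?thesis
    using ug_has_cycle_if_closed_walk im(2) assms(2,3) by blast
qed

lemma ug_has_cycle_if_endless_walk:
  assumes "digraph V E"
    and adjacent: "\<And>a b. Q a b \<Longrightarrow> (a, b) \<in> E \<or> (b, a) \<in> E"
    and step: "\<And>a b. Q a b \<Longrightarrow> \<exists>c. c \<noteq> a \<and> Q b c"
    and "Q a0 b0"
  shows "ug_has_cycle V E"
proof -
  obtain next_vertex where next_vertex:
    "\<And>a b. Q a b \<Longrightarrow> next_vertex a b \<noteq> a \<and> Q b (next_vertex a b)"
    using step by metis
  define s where "s n = ((\<lambda>(a, b). (b, next_vertex a b)) ^^ n) (a0, b0)" for n
  have s_Suc: "s (Suc n) = (snd (s n), next_vertex (fst (s n)) (snd (s n)))" for n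
    by (simp add: s_def split_beta)
  have Q_s: "Q (fst (s n)) (snd (s n))" for n
  proof (induction n)
    case 0
    show ?case using \<open>Q a0 b0\<close> by (simp add: s_def)
  next
    case (Suc n)
    then show ?case using next_vertex by (simp add: s_Suc)
  qed
  define a where "a n = fst (s n)" for n
  have a_adj: "(a n, a (Suc n)) \<in> E \<or> (a (Suc n), a n) \<in> E" for n
    using adjacent[OF Q_s[of n]] by (simp add: a_def s_Suc)
  show ?thesis
  proof (rule ug_has_cycle_if_non_backtracking_walk[of V a])
    show "finite V" using assms(1) by (simp add: digraph_def)
    fix n
    show "a n \<in> V" using a_adj[of n] assms(1) by (auto simp: digraph_def)
    show "(a n, a (Suc n)) \<in> E \<or> (a (Suc n), a n) \<in> E" by (rule a_adj)
    show "a (Suc n) \<noteq> a n" using a_adj[of n] assms(1) by (auto simp: digraph_def)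
    show "a (Suc (Suc n)) \<noteq> a n"
      using next_vertex[OF Q_s[of n]] by (simp add: a_def s_Suc)
  qed
qed

section \<open>The conflict graph of a digraph\<close>

definition conflict :: "'v \<times> 'v \<Rightarrow> 'v \<times> 'v \<Rightarrow> bool" where
  "conflict e f \<longleftrightarrow> e \<noteq> f \<and> (snd e = snd f \<or> (fst e = snd f \<and> snd e = fst f))"

lemma symp_conflict: "symp conflict"
  by (auto intro: sympI simp: conflict_def)

lemma irreflp_conflict: "irreflp conflict"
  by (auto intro: irreflpI simp: conflict_def)

lemma acyclic_if_no_antiparallel:
  assumes "digraph V E" and "\<not> ug_has_cycle V E" and "S \<subseteq> E"
    and no_antiparallel: "\<And>a b. (a, b) \<in> S \<Longrightarrow> (b, a) \<notin> S"
  shows "acyclic S"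
  unfolding acyclic_def
proof (intro allI notI)
  fix x assume "(x, x) \<in> S\<^sup>+"
  define Y where "Y = {y. (y, y) \<in> S\<^sup>+}"
  have pred: "\<exists>z. (z, y) \<in> S \<and> z \<in> Y" if "y \<in> Y" for y
  proof -
    from that obtain z where "(y, z) \<in> S\<^sup>*" "(z, y) \<in> S"
      by (metis Y_def mem_Collect_eq tranclD2)
    then show ?thesis by (auto simp: Y_def intro: rtrancl_into_trancl2)
  qed
  obtain z where "(z, x) \<in> S" "z \<in> Y"
    using pred[of x] \<open>(x, x) \<in> S\<^sup>+\<close> by (auto simp: Y_def)
  text \<open>Walking backwards along \<open>S\<close> inside \<open>Y\<close> never backtracks, since \<open>S\<close> has no
    antiparallel edges.\<close>
  have "ug_has_cycle V E"
  proof (rule ug_has_cycle_if_endless_walk[OF assms(1), of "\<lambda>a b. (b, a) \<in> S \<and> b \<in> Y" x z])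
    fix a b assume "(b, a) \<in> S \<and> b \<in> Y"
    then show "(a, b) \<in> E \<or> (b, a) \<in> E" using assms(3) by auto
    obtain c where "(c, b) \<in> S" "c \<in> Y" using pred \<open>(b, a) \<in> S \<and> b \<in> Y\<close> by blast
    moreover have "c \<noteq> a" using calculation \<open>(b, a) \<in> S \<and> b \<in> Y\<close> no_antiparallel by blast
    ultimately show "\<exists>c. c \<noteq> a \<and> (c, b) \<in> S \<and> c \<in> Y" by blast
  qed (use \<open>(z, x) \<in> S\<close> \<open>z \<in> Y\<close> in simp)
  then show False using assms(2) by simp
qed

lemma conflict_free_if_directed_forest:
  assumes "directed_forest S" and "e \<in> S" and "f \<in> S"
  shows "\<not> conflict e f"
proof
  assume "conflict e f"
  obtain a b c d where e: "e = (a, b)" and f: "f = (c, d)" by (cases e, cases f)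
  show False
  proof (cases "b = d")
    case True
    then show False
      using assms \<open>conflict e f\<close> e f by (auto simp: directed_forest_def conflict_def)
  next
    case False
    then have "f = (b, a)" using \<open>conflict e f\<close> e f by (simp add: conflict_def)
    then have "(a, a) \<in> S\<^sup>+" using assms(2,3) e by (meson r_into_trancl trancl_into_trancl)
    then show False using assms(1) by (simp add: directed_forest_def acyclic_def)
  qed
qed

lemma directed_forest_if_conflict_free:
  assumes "digraph V E" and "\<not> ug_has_cycle V E" and "S \<subseteq> E"
    and conflict_free: "\<And>e f. e \<in> S \<Longrightarrow> f \<in> S \<Longrightarrow> \<not> conflict e f"
  shows "directed_forest S"
proof -
  have "\<forall>(a, b) \<in> S. \<forall>(c, d) \<in> S. b = d \<longrightarrow> a = c"
    using conflict_free by (fastforce simp: conflict_def)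
  moreover have "(b, a) \<notin> S" if "(a, b) \<in> S" for a b
    using that conflict_free[of "(a, b)" "(b, a)"] assms(1,3)
    by (auto simp: conflict_def digraph_def)
  then have "acyclic S"
    using acyclic_if_no_antiparallel[OF assms(1-3)] by blast
  ultimately show ?thesis by (simp add: directed_forest_def)
qed

lemma tree_complex_eq_independence_complex:
  assumes "digraph V E" and "\<not> ug_has_cycle V E"
  shows "tree_complex E = independence_complex conflict E"
proof (intro equalityI subsetI)
  fix S assume "S \<in> tree_complex E"
  then show "S \<in> independence_complex conflict E"
    using conflict_free_if_directed_forest
    unfolding tree_complex_def independence_complex_def by blast
next
  fix S assume "S \<in> independence_complex conflict E"
  then show "S \<in> tree_complex E"
    using directed_forest_if_conflict_free[OF assms]
    by (auto simp: tree_complex_def independence_complex_def)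
qed

lemma antiparallel_if_common_head:
  assumes no_dominates: "\<not> (\<exists>x\<in>X. \<exists>w\<in>X. dominates conflict X x w)"
    and "(a, b) \<in> X" and "(c, b) \<in> X" and "c \<noteq> a"
  shows "(b, a) \<in> X"
proof (rule ccontr)
  assume "(b, a) \<notin> X"
  then have "dominates conflict X (c, b) (a, b)"
    using assms(4) by (auto simp: dominates_def conflict_def)
  then show False using no_dominates assms(2,3) by blast
qed

lemma other_in_edge_if_antiparallel:
  assumes "digraph V E" and "X \<subseteq> E"
    and no_dominates: "\<not> (\<exists>x\<in>X. \<exists>w\<in>X. dominates conflict X x w)"
    and "(a, b) \<in> X" and "(b, a) \<in> X"
  shows "\<exists>c. c \<noteq> a \<and> (c, b) \<in> X"
proof (rule ccontr)
  assume "\<not> (\<exists>c. c \<noteq> a \<and> (c, b) \<in> X)"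
  moreover have "a \<noteq> b" using assms(1,2,4) by (auto simp: digraph_def)
  ultimately have "dominates conflict X (b, a) (a, b)"
    by (auto simp: dominates_def conflict_def)
  then show False using no_dominates assms(4,5) by blast
qed

text \<open>If no edge of \<open>X\<close> dominates another, then from a conflicting pair one can walk forever
  along antiparallel pairs of edges of \<open>X\<close> without backtracking.\<close>

lemma exists_dominates_conflict:
  assumes "digraph V E" and "\<not> ug_has_cycle V E" and "X \<subseteq> E"
    and "e \<in> X" and "f \<in> X" and "conflict e f"
  shows "\<exists>x\<in>X. \<exists>w\<in>X. dominates conflict X x w"
proof (rule ccontr)
  assume no_dominates: "\<not> ?thesis"
  note antiparallel = antiparallel_if_common_head[OF no_dominates]
  define Q where "Q a b \<longleftrightarrow> (a, b) \<in> X \<and> (b, a) \<in> X" for a b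
  obtain a b where "Q a b"
  proof -
    obtain a b c d where e: "e = (a, b)" and f: "f = (c, d)" by (cases e, cases f)
    then have "(b, a) \<in> X"
      using assms(4-6) antiparallel[of a b c] by (cases "b = d") (auto simp: conflict_def)
    then show thesis using that[of a b] assms(4) e by (simp add: Q_def)
  qed
  have "ug_has_cycle V E"
  proof (rule ug_has_cycle_if_endless_walk[OF assms(1), of Q a b])
    fix a b assume "Q a b"
    then show "(a, b) \<in> E \<or> (b, a) \<in> E" using assms(3) by (auto simp: Q_def)
    obtain c where "c \<noteq> a" "(c, b) \<in> X"
      using other_in_edge_if_antiparallel[OF assms(1,3) no_dominates] \<open>Q a b\<close> by (auto simp: Q_def)
    then show "\<exists>c. c \<noteq> a \<and> Q b c"
      using antiparallel[of c b a] \<open>Q a b\<close> by (auto simp: Q_def)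
  qed fact
  then show False using assms(2) by simp
qed

theorem mainTheorem8:
  fixes V :: "'v set" and E :: "('v \<times> 'v) set"
  assumes "digraph V E" and "essentially_tree V E"
  shows "vertex_decomposable (tree_complex E) \<and> shellable (tree_complex E)"
proof -
  have no_cycle: "\<not> ug_has_cycle V E" using assms(2) by (simp add: essentially_tree_def)
  have "finite E" using assms(1) unfolding digraph_def by (meson finite_SigmaI finite_subset)
  have "vertex_decomposable (independence_complex conflict E)"
  proof (rule vertex_decomposable_independence_complex[OF \<open>finite E\<close> symp_conflict irreflp_conflict])
    fix Y assume "Y \<subseteq> E" and "\<exists>e\<in>Y. \<exists>f\<in>Y. conflict e f"
    then obtain e f where "e \<in> Y" "f \<in> Y" "conflict e f" by blast
    then show "\<exists>x\<in>Y. \<exists>w\<in>Y. dominates conflict Y x w"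
      by (rule exists_dominates_conflict[OF assms(1) no_cycle \<open>Y \<subseteq> E\<close>])
  qed
  moreover have "finite (independence_complex conflict E)"
    using \<open>finite E\<close> by (auto simp: independence_complex_def)
  moreover have "downward_closed (independence_complex conflict E)"
    by (auto simp: downward_closed_def independence_complex_def)
  ultimately show ?thesis
    using shellable_if_vertex_decomposable tree_complex_eq_independence_complex[OF assms(1) no_cycle]
    by simp
qed

end
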